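(* Let $R$ be a commutative Noetherian ring, $M$ a faithful primeful $R$-module having at least one prime submodule, $X=\mathrm{Spec}(M)$, $K\le M$, and $U=X\setminus V(K)$. If $N$ is a $(K:M)$-torsion $R$-module, then $\mathcal{A}(N,M)(U)=0$.
   Context: For a submodule $L$ of an $R$-module $M$, $(L:M)=\{r\in R\mid rM\subseteq L\}$. A submodule $P$ of $M$ is prime if $P\neq M$ and whenever $rm\in P$ ($r\in R$, $m\in M$) then $r\in (P:M)$ or $m\in P$. $\mathrm{Spec}(M)$ is the set of prime submodules. $M$ is faithful if $\mathrm{Ann}_R(M)=0$; primeful if $M=0$ or $\mathrm{Spec}(M)\to\mathrm{Spec}(R/\mathrm{Ann}(M))$, $P\mapsto(P:M)/\mathrm{Ann}(M)$, is surjective. For $L\le M$, $V(L)=\{P\in X\mid (P:M)\supseteq (L:M)\}$; these are the closed sets of the Zariski topology. For open $U\subseteq X$, $\mathrm{Supp}(U)=\{(P:M)\mid P\in U\}$. $\mathcal{A}(N,M)(U)$ is the $R$-module of families $(\gamma_{\mathfrak p})_{\mathfrak p\in\mathrm{Supp}(U)}\in\prod_{\mathfrak p\in\mathrm{Supp}(U)}N_{\mathfrak p}$ such that for each $Q\in U$ there exist an open neighbourhood $W\subseteq U$ of $Q$ and $s\in R$, $m\in N$ with $s\notin(P:M)$ and $\gamma_{(P:M)}=m/s$ for every $P\in W$. $N$ is $I$-torsion if every element of $N$ is annihilated by some power of $I$. *)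

theory Defs
  imports "HOL-Analysis.Analysis"
begin

definition is_ideal :: "'a::comm_ring_1 set \<Rightarrow> bool" where
  "is_ideal I \<longleftrightarrow> 0 \<in> I \<and> (\<forall>a\<in>I. \<forall>b\<in>I. a + b \<in> I) \<and> (\<forall>a\<in>I. - a \<in> I)
     \<and> (\<forall>r. \<forall>a\<in>I. r * a \<in> I)"

definition is_prime_ideal :: "'a::comm_ring_1 set \<Rightarrow> bool" where
  "is_prime_ideal p \<longleftrightarrow> is_ideal p \<and> p \<noteq> UNIV \<and> (\<forall>a b. a * b \<in> p \<longrightarrow> a \<in> p \<or> b \<in> p)"

definition noetherian_ring :: "'a::comm_ring_1 itself \<Rightarrow> bool" where
  "noetherian_ring _ \<longleftrightarrow>
     (\<forall>I :: nat \<Rightarrow> 'a set. (\<forall>n. is_ideal (I n)) \<and> (\<forall>n. I n \<subseteq> I (Suc n))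
        \<longrightarrow> (\<exists>k. \<forall>n\<ge>k. I n = I k))"

definition ideal_gen :: "'a::comm_ring_1 set \<Rightarrow> 'a set" where
  "ideal_gen S = \<Inter>{I. is_ideal I \<and> S \<subseteq> I}"

fun ideal_pow :: "'a::comm_ring_1 set \<Rightarrow> nat \<Rightarrow> 'a set" where
  "ideal_pow I 0 = UNIV"
| "ideal_pow I (Suc k) = ideal_gen {a * b | a b. a \<in> I \<and> b \<in> ideal_pow I k}"

section \<open>Modules: M is the whole type 'b with scalar multiplication sc\<close>

definition colon :: "('a::comm_ring_1 \<Rightarrow> 'b::ab_group_add \<Rightarrow> 'b) \<Rightarrow> 'b set \<Rightarrow> 'a set" where
  "colon sc L = {r. \<forall>m. sc r m \<in> L}"

definition ann :: "('a::comm_ring_1 \<Rightarrow> 'b::ab_group_add \<Rightarrow> 'b) \<Rightarrow> 'a set" where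
  "ann sc = {r. \<forall>m. sc r m = 0}"

definition faithful :: "('a::comm_ring_1 \<Rightarrow> 'b::ab_group_add \<Rightarrow> 'b) \<Rightarrow> bool" where
  "faithful sc \<longleftrightarrow> ann sc = {0}"

definition prime_submodule :: "('a::comm_ring_1 \<Rightarrow> 'b::ab_group_add \<Rightarrow> 'b) \<Rightarrow> 'b set \<Rightarrow> bool" where
  "prime_submodule sc P \<longleftrightarrow> module.subspace sc P \<and> P \<noteq> UNIV \<and>
     (\<forall>r m. sc r m \<in> P \<longrightarrow> r \<in> colon sc P \<or> m \<in> P)"

definition Spec_mod :: "('a::comm_ring_1 \<Rightarrow> 'b::ab_group_add \<Rightarrow> 'b) \<Rightarrow> 'b set set" where
  "Spec_mod sc = {P. prime_submodule sc P}"

text \<open>Primeful: M = 0, or P \<mapsto> (P:M)/Ann(M) maps Spec(M) onto Spec(R/Ann(M));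
  the primes of R/Ann(M) are written as the primes of R containing Ann(M).\<close>
definition primeful :: "('a::comm_ring_1 \<Rightarrow> 'b::ab_group_add \<Rightarrow> 'b) \<Rightarrow> bool" where
  "primeful sc \<longleftrightarrow> (UNIV :: 'b set) = {0} \<or>
     (\<forall>p. is_prime_ideal p \<and> ann sc \<subseteq> p \<longrightarrow> (\<exists>P\<in>Spec_mod sc. colon sc P = p))"

definition Vset :: "('a::comm_ring_1 \<Rightarrow> 'b::ab_group_add \<Rightarrow> 'b) \<Rightarrow> 'b set \<Rightarrow> 'b set set" where
  "Vset sc L = {P \<in> Spec_mod sc. colon sc L \<subseteq> colon sc P}"

definition zariski :: "('a::comm_ring_1 \<Rightarrow> 'b::ab_group_add \<Rightarrow> 'b) \<Rightarrow> 'b set topology" where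
  "zariski sc = topology_generated_by
     {Spec_mod sc - Vset sc L | L. module.subspace sc L}"

definition Supp_open :: "('a::comm_ring_1 \<Rightarrow> 'b::ab_group_add \<Rightarrow> 'b) \<Rightarrow> 'b set set \<Rightarrow> 'a set set" where
  "Supp_open sc U = (\<lambda>P. colon sc P) ` U"

section \<open>Localization N_p: elements are equivalence classes of pairs (n, s), s \<notin> p\<close>

definition loc_frac :: "('a::comm_ring_1 \<Rightarrow> 'c::ab_group_add \<Rightarrow> 'c) \<Rightarrow> 'a set \<Rightarrow> 'c \<Rightarrow> 'a \<Rightarrow> ('c \<times> 'a) set" where
  "loc_frac scN p n s = {(n', s'). s' \<notin> p \<and> (\<exists>u. u \<notin> p \<and> scN u (scN s' n - scN s n') = 0)}"

definition localization :: "('a::comm_ring_1 \<Rightarrow> 'c::ab_group_add \<Rightarrow> 'c) \<Rightarrow> 'a set \<Rightarrow> ('c \<times> 'a) set set" where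
  "localization scN p = {loc_frac scN p n s | n s. s \<notin> p}"

text \<open>Sections A(N,M)(U): families indexed by Supp(U) (extended by {} outside Supp(U)).\<close>
definition sections ::
  "('a::comm_ring_1 \<Rightarrow> 'c::ab_group_add \<Rightarrow> 'c) \<Rightarrow> ('a \<Rightarrow> 'b::ab_group_add \<Rightarrow> 'b) \<Rightarrow> 'b set set
     \<Rightarrow> ('a set \<Rightarrow> ('c \<times> 'a) set) set" where
  "sections scN sc U = {\<gamma>.
     (\<forall>p\<in>Supp_open sc U. \<gamma> p \<in> localization scN p) \<and>
     (\<forall>p. p \<notin> Supp_open sc U \<longrightarrow> \<gamma> p = {}) \<and>
     (\<forall>Q\<in>U. \<exists>W s n. openin (zariski sc) W \<and> Q \<in> W \<and> W \<subseteq> U \<and>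
        (\<forall>P\<in>W. s \<notin> colon sc P \<and> \<gamma> (colon sc P) = loc_frac scN (colon sc P) n s))}"

definition zero_section ::
  "('a::comm_ring_1 \<Rightarrow> 'c::ab_group_add \<Rightarrow> 'c) \<Rightarrow> ('a \<Rightarrow> 'b::ab_group_add \<Rightarrow> 'b) \<Rightarrow> 'b set set
     \<Rightarrow> 'a set \<Rightarrow> ('c \<times> 'a) set" where
  "zero_section scN sc U =
     (\<lambda>p. if p \<in> Supp_open sc U then loc_frac scN p 0 1 else {})"

definition torsion :: "('a::comm_ring_1 \<Rightarrow> 'c::ab_group_add \<Rightarrow> 'c) \<Rightarrow> 'a set \<Rightarrow> bool" where
  "torsion scN I \<longleftrightarrow> (\<forall>n. \<exists>k. \<forall>r\<in>ideal_pow I k. scN r n = 0)"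

end

theory Submission
  imports Defs
begin

text \<open>For \<open>P \<notin> V(K)\<close> there is \<open>a \<in> (K:M)\<close> with \<open>a \<notin> (P:M)\<close>. Since \<open>(P:M)\<close> is a prime ideal,
  every power of \<open>a\<close> avoids it, and as \<open>N\<close> is \<open>(K:M)\<close>-torsion each element of \<open>N\<close> is killed
  by such a power. Hence every stalk of \<open>N\<close> over \<open>U\<close> is zero, and so is every section.\<close>

lemma one_notin_colon_prime:
  assumes "module sc" and "prime_submodule sc P"
  shows "1 \<notin> colon sc P"
proof -
  interpret module sc by fact
  show ?thesis
    using assms(2) unfolding prime_submodule_def colon_def by auto
qed

lemma mult_notin_colon_prime:
  assumes "module sc" and "prime_submodule sc P"
    and "a \<notin> colon sc P" and "b \<notin> colon sc P"
  shows "a * b \<notin> colon sc P"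
proof
  interpret module sc by fact
  assume "a * b \<in> colon sc P"
  from assms(4) obtain m where m: "sc b m \<notin> P" unfolding colon_def by auto
  have "sc a (sc b m) \<in> P" using \<open>a * b \<in> colon sc P\<close> unfolding colon_def by auto
  then show False using assms(2,3) m unfolding prime_submodule_def by blast
qed

lemma power_notin_colon_prime:
  assumes "module sc" and "prime_submodule sc P" and "a \<notin> colon sc P"
  shows "a ^ k \<notin> colon sc P"
  by (induction k)
    (simp_all add: one_notin_colon_prime mult_notin_colon_prime assms)

lemma power_in_ideal_pow: "a \<in> I \<Longrightarrow> a ^ k \<in> ideal_pow I k"
proof (induction k)
  case (Suc k)
  have "a * a ^ k \<in> {a * b | a b. a \<in> I \<and> b \<in> ideal_pow I k}" using Suc by blast
  then show ?case by (auto simp: ideal_gen_def)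
qed simp

lemma loc_frac_eq_UNIV_if_annihilated:
  fixes scN :: "'a::comm_ring_1 \<Rightarrow> 'c::ab_group_add \<Rightarrow> 'c"
  assumes "module scN"
    and kill: "\<And>n. \<exists>u. u \<notin> p \<and> scN u n = 0"
    and mult_closed: "\<And>a b. a \<notin> p \<Longrightarrow> b \<notin> p \<Longrightarrow> a * b \<notin> p"
  shows "loc_frac scN p n s = {(n', s'). s' \<notin> p}"
proof -
  interpret module scN by fact
  have "(n', s') \<in> loc_frac scN p n s" if "s' \<notin> p" for n' s'
  proof -
    obtain u where u: "u \<notin> p" "scN u n = 0" using kill by blast
    obtain u' where u': "u' \<notin> p" "scN u' n' = 0" using kill by blast
    have "scN (u * u') (scN s' n) = scN (u' * s') (scN u n)"
      by (simp add: mult_ac)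
    moreover have "scN (u * u') (scN s n') = scN (u * s) (scN u' n')"
      by (simp add: mult_ac)
    ultimately have "scN (u * u') (scN s' n - scN s n') = 0"
      using u u' by (simp add: scale_right_diff_distrib)
    moreover have "u * u' \<notin> p" using mult_closed u u' by blast
    ultimately show ?thesis using that unfolding loc_frac_def by blast
  qed
  then show ?thesis unfolding loc_frac_def by auto
qed

lemma loc_frac_trivial_if_torsion:
  assumes "module sc" and "module scN" and "prime_submodule sc P"
    and "torsion scN I" and "a \<in> I" and "a \<notin> colon sc P"
  shows "loc_frac scN (colon sc P) n s = {(n', s'). s' \<notin> colon sc P}"
proof (rule loc_frac_eq_UNIV_if_annihilated[OF assms(2)])
  fix n
  obtain k where "\<forall>r\<in>ideal_pow I k. scN r n = 0"
    using assms(4) unfolding torsion_def by blast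
  then show "\<exists>u. u \<notin> colon sc P \<and> scN u n = 0"
    using power_in_ideal_pow[OF assms(5)] power_notin_colon_prime[OF assms(1,3,6)] by blast
qed (use mult_notin_colon_prime assms(1,3) in blast)

lemma openin_zariski_Diff_Vset:
  "module.subspace sc K \<Longrightarrow> openin (zariski sc) (Spec_mod sc - Vset sc K)"
  unfolding zariski_def by (rule topology_generated_by_Basis) blast

lemma zero_section_in_sections:
  assumes "module sc" and "openin (zariski sc) U" and "U \<subseteq> Spec_mod sc"
  shows "zero_section scN sc U \<in> sections scN sc U"
  unfolding sections_def
proof (intro CollectI conjI ballI allI impI)
  have one: "1 \<notin> colon sc P" if "P \<in> U" for P
    using one_notin_colon_prime[OF assms(1)] that assms(3) unfolding Spec_mod_def by blast
  show "zero_section scN sc U p \<in> localization scN p" if "p \<in> Supp_open sc U" for p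
    using that one unfolding zero_section_def localization_def Supp_open_def by auto
  show "\<exists>W s n. openin (zariski sc) W \<and> Q \<in> W \<and> W \<subseteq> U \<and>
      (\<forall>P\<in>W. s \<notin> colon sc P \<and> zero_section scN sc U (colon sc P) = loc_frac scN (colon sc P) n s)"
    if "Q \<in> U" for Q
  proof (intro exI conjI ballI)
    show "zero_section scN sc U (colon sc P) = loc_frac scN (colon sc P) 0 1" if "P \<in> U" for P
      using that unfolding zero_section_def Supp_open_def by auto
  qed (use assms(2) \<open>Q \<in> U\<close> one in auto)
qed (simp add: zero_section_def)

lemma section_eq_zero_section:
  assumes trivial: "\<And>p n s. p \<in> Supp_open sc U \<Longrightarrow> s \<notin> p \<Longrightarrow>
      loc_frac scN p n s = loc_frac scN p 0 1"
    and "\<gamma> \<in> sections scN sc U"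
  shows "\<gamma> = zero_section scN sc U"
proof
  fix p
  show "\<gamma> p = zero_section scN sc U p"
  proof (cases "p \<in> Supp_open sc U")
    case True
    then have "\<gamma> p \<in> localization scN p" using assms(2) unfolding sections_def by auto
    then obtain n s where "s \<notin> p" "\<gamma> p = loc_frac scN p n s"
      unfolding localization_def by auto
    then show ?thesis using True trivial unfolding zero_section_def by simp
  next
    case False
    then show ?thesis using assms(2) unfolding sections_def zero_section_def by auto
  qed
qed

theorem corollary3p15:
  fixes sc :: "'a::comm_ring_1 \<Rightarrow> 'b::ab_group_add \<Rightarrow> 'b"
    and scN :: "'a \<Rightarrow> 'c::ab_group_add \<Rightarrow> 'c"
    and K :: "'b set"
  assumes "noetherian_ring TYPE('a)"
    and "module sc"
    and "faithful sc"
    and "primeful sc"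
    and "Spec_mod sc \<noteq> {}"
    and "module.subspace sc K"
    and "module scN"
    and "torsion scN (colon sc K)"
  shows "sections scN sc (Spec_mod sc - Vset sc K) =
           {zero_section scN sc (Spec_mod sc - Vset sc K)}"
proof -
  define U where "U = Spec_mod sc - Vset sc K"
  have "loc_frac scN p n s = loc_frac scN p 0 1" if p_Supp: "p \<in> Supp_open sc U" for p n s
  proof -
    obtain P where "P \<in> U" and p: "p = colon sc P"
      using p_Supp unfolding Supp_open_def by auto
    then have "prime_submodule sc P" and "\<not> colon sc K \<subseteq> colon sc P"
      unfolding U_def Vset_def Spec_mod_def by auto
    then obtain a where "a \<in> colon sc K" "a \<notin> colon sc P" by blast
    with \<open>prime_submodule sc P\<close> show ?thesis
      using loc_frac_trivial_if_torsion[OF assms(2,7) _ assms(8)] p by simp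
  qed
  then have "sections scN sc U \<subseteq> {zero_section scN sc U}"
    using section_eq_zero_section by blast
  moreover have "zero_section scN sc U \<in> sections scN sc U"
    using zero_section_in_sections[OF assms(2) openin_zariski_Diff_Vset[OF assms(6)]]
    unfolding U_def by blast
  ultimately show ?thesis unfolding U_def by blast
qed

end
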